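(* Let $W$ be a (1-safe) DAW-net and $\rho=(M_0,\eta_0)\xrightarrow{t_0}(M_1,\eta_1)\xrightarrow{t_1}\cdots\xrightarrow{t_{\ell-1}}(M_\ell,\eta_\ell)$ a sequence of valid firings of $W$ ($\ell\ge0$). For every $0\le i\le\ell$ and every guard $\Phi$ over the data model of $W$, and every DNF characterisation $\bigvee_{k}t^k_1\wedge\dots\wedge t^k_{n_k}$ of $\Phi$ with translation $[\![\Phi]\!]=\bigvee_k[\![t^k_1]\!]\wedge\dots\wedge[\![t^k_{n_k}]\!]$: $$\mathcal{D},\eta_i\models\Phi\quad\text{iff}\quad\Phi_i(\rho)\models i{:}[\![\Phi]\!],$$ where $i{:}[\![\Phi]\!]$ is obtained by prefixing each atom $[\![t]\!]$ by $i{:}$, and a set $X$ satisfies a prefixed atom $i{:}[\![t]\!]$ iff $i{:}[\![t]\!]\in X$ (Boolean connectives read classically).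
   Context: Data model $\mathcal{D}=(\mathcal{V},\Delta,\mathrm{dm},\mathrm{ord})$: variables $\mathcal{V}$, finite domains $\Delta_i$ assigned by total surjective $\mathrm{dm}$, and partial orders $\le_{\Delta_i}$ on some domains. Assignments are partial functions $\eta$ with $\eta(v)\in\mathrm{dm}(v)$. Guards: $\Phi::=\mathit{true}\mid\mathrm{def}(v)\mid t_1=t_2\mid t_1\le t_2\mid\neg\Phi\mid\Phi\wedge\Phi$ ($t_i$ variables or constants); with $t[\eta]=\eta(t)$ for variables on which $\eta$ is defined and $t$ otherwise: $\mathrm{def}(v)$ holds iff $\eta(v)$ is defined; $t_1=t_2$ iff $t_1[\eta],t_2[\eta]$ are both constants and equal; $t_1\le t_2$ iff both lie in some $\Delta_i$ with an order and $t_1[\eta]\le_{\Delta_i}t_2[\eta]$; $\neg,\wedge$ classical. DAW-net $W=\langle\mathcal{D},(P,T,F),\mathrm{wr},\mathrm{gd}\rangle$: $(P,T,F)$ a workflow Petri net with places $\mathit{start},\mathit{sink}$, presets ${}^\bullet t$ and postsets $t^\bullet$; $\mathrm{wr}(t)$ a partial function from variables with $\mathrm{wr}(t)(v)\subseteq\mathrm{dm}(v)$; $\mathrm{gd}(t)$ a guard. A firing $(M,\eta)\xrightarrow{t}(M',\eta')$ is valid iff $\{p\mid M(p)>0\}\supseteq{}^\bullet t$, $\mathcal{D},\eta\models\mathrm{gd}(t)$, $M'(p)=M(p)-1$ on ${}^\bullet t\setminus t^\bullet$, $M(p)+1$ on $t^\bullet\setminus{}^\bullet t$, $M(p)$ otherwise,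 $\mathrm{dom}(\eta')=\mathrm{dom}(\eta)\cup\{v\mid\mathrm{wr}(t)(v)\neq\emptyset\}\setminus\{v\mid\mathrm{wr}(t)(v)=\emptyset\}$ and $\eta'(v)\in\mathrm{wr}(t)(v)$ for $v\in\mathrm{dom}(\mathrm{wr}(t))$, $\eta'(v)=\eta(v)$ otherwise. $W$ is assumed 1-safe. $\mathcal{V}'$ is the finite set of variables appearing in $W$; $\mathrm{adm}(v)=\bigcup_{t\in T}\mathrm{wr}(t)(v)$. A DNF characterisation of $\Phi$ is a formula $\bigvee_{k}t^k_1\wedge\dots\wedge t^k_{n_k}$ equivalent to $\Phi$ over $\mathcal{D}$ in which each term is $v=o$ (with $o$ a constant) or $\neg\mathrm{def}(v)$; the translation is $[\![v=o]\!]=(v=o)$ and $[\![\neg\mathrm{def}(v)]\!]=(v=\mathrm{null})$, where $\mathrm{null}$ is a fresh constant. For $\rho$ as in the claim and $0\le i\le\ell$, $\Phi_i(\rho)=\Phi^\nu_i(\rho)\cup\Phi^\tau_i(\rho)$, with $\Phi^\nu_i(\rho)=\{i{:}p=\mathrm{true},\neg(i{:}p=\mathrm{false})\mid p\in P,M_i(p)>0\}\cup\{i{:}p=\mathrm{false},\neg(i{:}p=\mathrm{true})\mid p\in P,M_i(p)=0\}\cup\{i{:}v=o,\neg(i{:}v=\mathrm{null})\mid v\in\mathcal{V}',\eta_i(v)=o\}\cup\{i{:}v=\mathrm{null}\mid v\in\mathcal{V}',\eta_i(v)\text{ undefined}\}\cup\{\neg(i{:}v=o)\mid v\in\mathcal{V}',o\in\mathrm{adm}(v),\eta_i(v)\neq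 o\text{ or undefined}\}\cup\{i{:}\mathit{trans}=\mathrm{true},\neg(i{:}\mathit{trans}=\mathrm{false})\}$, and $\Phi^\tau_i(\rho)=\emptyset$ if $i\ge\ell$, $\Phi^\tau_i(\rho)=\{i{:}t_i\}\cup\{\neg(i{:}t)\mid t\in T,t\neq t_i\}$ if $i<\ell$. (Here $i{:}A$ are ground atoms indexed by time step $i$, and $\neg$ is classical negation.)
   Formalization: The equivalence is asserted only for DNF characterisations of $\Phi$ all of whose terms mention variables of $\mathcal{V}'$, the variables appearing in W. The paper assumes this as well. *)

theory Defs
  imports Main
begin

(* Variables are the elements of type 'v (so V = UNIV), values/constants of type 'c. *)
record ('v, 'c) data_model =
  domains :: "'c set set"
  dm      :: "'v \<Rightarrow> 'c set"
  ord     :: "'c set \<Rightarrow> ('c \<Rightarrow> 'c \<Rightarrow> bool) option"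

definition partial_order_on_dom :: "'c set \<Rightarrow> ('c \<Rightarrow> 'c \<Rightarrow> bool) \<Rightarrow> bool" where
  "partial_order_on_dom D r \<longleftrightarrow>
     (\<forall>x\<in>D. r x x) \<and>
     (\<forall>x\<in>D. \<forall>y\<in>D. r x y \<and> r y x \<longrightarrow> x = y) \<and>
     (\<forall>x\<in>D. \<forall>y\<in>D. \<forall>z\<in>D. r x y \<and> r y z \<longrightarrow> r x z)"

definition wf_data_model :: "('v, 'c) data_model \<Rightarrow> bool" where
  "wf_data_model D \<longleftrightarrow>
     (\<forall>X\<in>domains D. finite X) \<and>
     range (dm D) = domains D \<and>
     (\<forall>X r. ord D X = Some r \<longrightarrow> X \<in> domains D \<and> partial_order_on_dom X r)"

definition assignment :: "('v, 'c) data_model \<Rightarrow> ('v \<Rightarrow> 'c option) \<Rightarrow> bool" where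
  "assignment D \<eta> \<longleftrightarrow> (\<forall>v c. \<eta> v = Some c \<longrightarrow> c \<in> dm D v)"

datatype ('v, 'c) gterm = Var 'v | Const 'c

datatype ('v, 'c) guard =
    GTrue
  | Def 'v
  | Eq "('v, 'c) gterm" "('v, 'c) gterm"
  | Le "('v, 'c) gterm" "('v, 'c) gterm"
  | GNot "('v, 'c) guard"
  | GAnd "('v, 'c) guard" "('v, 'c) guard"

fun tval :: "('v \<Rightarrow> 'c option) \<Rightarrow> ('v, 'c) gterm \<Rightarrow> 'c option" where
  "tval \<eta> (Var v) = \<eta> v"
| "tval \<eta> (Const c) = Some c"

fun holds :: "('v, 'c) data_model \<Rightarrow> ('v \<Rightarrow> 'c option) \<Rightarrow> ('v, 'c) guard \<Rightarrow> bool" where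
  "holds D \<eta> GTrue = True"
| "holds D \<eta> (Def v) = (\<eta> v \<noteq> None)"
| "holds D \<eta> (Eq t1 t2) =
     (\<exists>a b. tval \<eta> t1 = Some a \<and> tval \<eta> t2 = Some b \<and> a = b)"
| "holds D \<eta> (Le t1 t2) =
     (\<exists>a b. tval \<eta> t1 = Some a \<and> tval \<eta> t2 = Some b \<and>
        (\<exists>X\<in>domains D. \<exists>r. ord D X = Some r \<and> a \<in> X \<and> b \<in> X \<and> r a b))"
| "holds D \<eta> (GNot g) = (\<not> holds D \<eta> g)"
| "holds D \<eta> (GAnd g1 g2) = (holds D \<eta> g1 \<and> holds D \<eta> g2)"

fun tvars :: "('v, 'c) gterm \<Rightarrow> 'v set" where
  "tvars (Var v) = {v}"
| "tvars (Const c) = {}"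

fun gvars :: "('v, 'c) guard \<Rightarrow> 'v set" where
  "gvars GTrue = {}"
| "gvars (Def v) = {v}"
| "gvars (Eq t1 t2) = tvars t1 \<union> tvars t2"
| "gvars (Le t1 t2) = tvars t1 \<union> tvars t2"
| "gvars (GNot g) = gvars g"
| "gvars (GAnd g1 g2) = gvars g1 \<union> gvars g2"

record ('p, 't, 'v, 'c) dawnet =
  dmodel      :: "('v, 'c) data_model"
  places      :: "'p set"
  transitions :: "'t set"
  flow        :: "(('p + 't) \<times> ('p + 't)) set"
  start       :: 'p
  sink        :: 'p
  wr          :: "'t \<Rightarrow> 'v \<Rightarrow> 'c set option"
  gd          :: "'t \<Rightarrow> ('v, 'c) guard"

definition nodes :: "('p, 't, 'v, 'c) dawnet \<Rightarrow> ('p + 't) set" where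
  "nodes W = Inl ` places W \<union> Inr ` transitions W"

definition workflow_net :: "('p, 't, 'v, 'c) dawnet \<Rightarrow> bool" where
  "workflow_net W \<longleftrightarrow>
     finite (places W) \<and> finite (transitions W) \<and>
     flow W \<subseteq> (Inl ` places W \<times> Inr ` transitions W) \<union> (Inr ` transitions W \<times> Inl ` places W) \<and>
     start W \<in> places W \<and> sink W \<in> places W \<and>
     (\<forall>x. (x, Inl (start W)) \<notin> flow W) \<and>
     (\<forall>x. (Inl (sink W), x) \<notin> flow W) \<and>
     (\<forall>x\<in>nodes W. (Inl (start W), x) \<in> (flow W)\<^sup>* \<and> (x, Inl (sink W)) \<in> (flow W)\<^sup>*)"

definition preset :: "('p, 't, 'v, 'c) dawnet \<Rightarrow> 't \<Rightarrow> 'p set" where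
  "preset W t = {p. (Inl p, Inr t) \<in> flow W}"

definition postset :: "('p, 't, 'v, 'c) dawnet \<Rightarrow> 't \<Rightarrow> 'p set" where
  "postset W t = {p. (Inr t, Inl p) \<in> flow W}"

definition valid_firing ::
  "('p, 't, 'v, 'c) dawnet \<Rightarrow> ('p \<Rightarrow> nat) \<Rightarrow> ('v \<Rightarrow> 'c option) \<Rightarrow> 't
     \<Rightarrow> ('p \<Rightarrow> nat) \<Rightarrow> ('v \<Rightarrow> 'c option) \<Rightarrow> bool" where
  "valid_firing W M \<eta> t M' \<eta>' \<longleftrightarrow>
     t \<in> transitions W \<and>
     preset W t \<subseteq> {p. M p > 0} \<and>
     holds (dmodel W) \<eta> (gd W t) \<and>
     (\<forall>p. M' p = (if p \<in> preset W t - postset W t then M p - 1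
                  else if p \<in> postset W t - preset W t then M p + 1
                  else M p)) \<and>
     (\<forall>v. case wr W t v of
            None \<Rightarrow> \<eta>' v = \<eta> v
          | Some S \<Rightarrow> (if S = {} then \<eta>' v = None else (\<exists>c\<in>S. \<eta>' v = Some c)))"

inductive reachable :: "('p, 't, 'v, 'c) dawnet \<Rightarrow> ('p \<Rightarrow> nat) \<Rightarrow> ('v \<Rightarrow> 'c option) \<Rightarrow> bool"
  for W where
  init: "reachable W (\<lambda>p. if p = start W then 1 else 0) Map.empty"
| step: "reachable W M \<eta> \<Longrightarrow> valid_firing W M \<eta> t M' \<eta>' \<Longrightarrow> reachable W M' \<eta>'"

definition one_safe :: "('p, 't, 'v, 'c) dawnet \<Rightarrow> bool" where
  "one_safe W \<longleftrightarrow> (\<forall>M \<eta> p. reachable W M \<eta> \<longrightarrow> M p \<le> 1)"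

definition daw_net :: "('p, 't, 'v, 'c) dawnet \<Rightarrow> bool" where
  "daw_net W \<longleftrightarrow>
     wf_data_model (dmodel W) \<and> workflow_net W \<and>
     (\<forall>t\<in>transitions W. finite (dom (wr W t)) \<and>
        (\<forall>v S. wr W t v = Some S \<longrightarrow> S \<subseteq> dm (dmodel W) v))"

definition net_vars :: "('p, 't, 'v, 'c) dawnet \<Rightarrow> 'v set" where
  "net_vars W = (\<Union>t\<in>transitions W. dom (wr W t) \<union> gvars (gd W t))"

definition adm :: "('p, 't, 'v, 'c) dawnet \<Rightarrow> 'v \<Rightarrow> 'c set" where
  "adm W v = (\<Union>t\<in>transitions W. case wr W t v of None \<Rightarrow> {} | Some S \<Rightarrow> S)"

(* run rho of length l: markings Ms 0..l, assignments etas 0..l, transitions ts 0..l-1 *)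
definition valid_run ::
  "('p, 't, 'v, 'c) dawnet \<Rightarrow> nat \<Rightarrow> (nat \<Rightarrow> 'p \<Rightarrow> nat) \<Rightarrow> (nat \<Rightarrow> 'v \<Rightarrow> 'c option)
     \<Rightarrow> (nat \<Rightarrow> 't) \<Rightarrow> bool" where
  "valid_run W l Ms etas ts \<longleftrightarrow>
     assignment (dmodel W) (etas 0) \<and>
     (\<forall>i<l. valid_firing W (Ms i) (etas i) (ts i) (Ms (Suc i)) (etas (Suc i)))"

datatype ('v, 'c) dnf_lit = DEq 'v 'c | DUndef 'v

fun dlit_guard :: "('v, 'c) dnf_lit \<Rightarrow> ('v, 'c) guard" where
  "dlit_guard (DEq v c) = Eq (Var v) (Const c)"
| "dlit_guard (DUndef v) = GNot (Def v)"

fun dlit_var :: "('v, 'c) dnf_lit \<Rightarrow> 'v" where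
  "dlit_var (DEq v c) = v"
| "dlit_var (DUndef v) = v"

definition holds_dnf :: "('v, 'c) data_model \<Rightarrow> ('v \<Rightarrow> 'c option) \<Rightarrow> ('v, 'c) dnf_lit list list \<Rightarrow> bool" where
  "holds_dnf D \<eta> ds \<longleftrightarrow> (\<exists>k\<in>set ds. \<forall>l\<in>set k. holds D \<eta> (dlit_guard l))"

definition dnf_char :: "('v, 'c) data_model \<Rightarrow> ('v, 'c) guard \<Rightarrow> ('v, 'c) dnf_lit list list \<Rightarrow> bool" where
  "dnf_char D \<Phi> ds \<longleftrightarrow> (\<forall>\<eta>. assignment D \<eta> \<longrightarrow> (holds D \<eta> \<Phi> \<longleftrightarrow> holds_dnf D \<eta> ds))"

definition dnf_vars :: "('v, 'c) dnf_lit list list \<Rightarrow> 'v set" where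
  "dnf_vars ds = (\<Union>k\<in>set ds. dlit_var ` set k)"

(* ground atoms i:A ; AVar i v None encodes i:v = null *)
datatype ('p, 't, 'v, 'c) atom =
    APlace nat 'p bool        (* i:p = true / false *)
  | AVar nat 'v "'c option"
  | ATrans nat bool           (* i:trans = true / false *)
  | AFire nat 't

datatype 'a lit = Pos 'a | Neg 'a   (* Neg = classical negation *)

fun transl :: "nat \<Rightarrow> ('v, 'c) dnf_lit \<Rightarrow> ('p, 't, 'v, 'c) atom" where
  "transl i (DEq v c) = AVar i v (Some c)"
| "transl i (DUndef v) = AVar i v None"

definition models_transl :: "('p, 't, 'v, 'c) atom lit set \<Rightarrow> nat \<Rightarrow> ('v, 'c) dnf_lit list list \<Rightarrow> bool" where
  "models_transl X i ds \<longleftrightarrow> (\<exists>k\<in>set ds. \<forall>l\<in>set k. Pos (transl i l) \<in> X)"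

definition Phi_nu ::
  "('p, 't, 'v, 'c) dawnet \<Rightarrow> (nat \<Rightarrow> 'p \<Rightarrow> nat) \<Rightarrow> (nat \<Rightarrow> 'v \<Rightarrow> 'c option) \<Rightarrow> nat
     \<Rightarrow> ('p, 't, 'v, 'c) atom lit set" where
  "Phi_nu W Ms etas i =
     {Pos (APlace i p True) | p. p \<in> places W \<and> Ms i p > 0} \<union>
     {Neg (APlace i p False) | p. p \<in> places W \<and> Ms i p > 0} \<union>
     {Pos (APlace i p False) | p. p \<in> places W \<and> Ms i p = 0} \<union>
     {Neg (APlace i p True) | p. p \<in> places W \<and> Ms i p = 0} \<union>
     {Pos (AVar i v (Some c)) | v c. v \<in> net_vars W \<and> etas i v = Some c} \<union>
     {Neg (AVar i v None) | v c. v \<in> net_vars W \<and> etas i v = Some c} \<union>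
     {Pos (AVar i v None) | v. v \<in> net_vars W \<and> etas i v = None} \<union>
     {Neg (AVar i v (Some c)) | v c. v \<in> net_vars W \<and> c \<in> adm W v \<and> etas i v \<noteq> Some c} \<union>
     {Pos (ATrans i True), Neg (ATrans i False)}"

definition Phi_tau ::
  "('p, 't, 'v, 'c) dawnet \<Rightarrow> nat \<Rightarrow> (nat \<Rightarrow> 't) \<Rightarrow> nat \<Rightarrow> ('p, 't, 'v, 'c) atom lit set" where
  "Phi_tau W l ts i =
     (if l \<le> i then {}
      else {Pos (AFire i (ts i))} \<union> {Neg (AFire i t) | t. t \<in> transitions W \<and> t \<noteq> ts i})"

definition Phi ::
  "('p, 't, 'v, 'c) dawnet \<Rightarrow> nat \<Rightarrow> (nat \<Rightarrow> 'p \<Rightarrow> nat) \<Rightarrow> (nat \<Rightarrow> 'v \<Rightarrow> 'c option)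
     \<Rightarrow> (nat \<Rightarrow> 't) \<Rightarrow> nat \<Rightarrow> ('p, 't, 'v, 'c) atom lit set" where
  "Phi W l Ms etas ts i = Phi_nu W Ms etas i \<union> Phi_tau W l ts i"

end

theory Submission
  imports Defs
begin

text \<open>
  On the variables of \<open>W\<close>, the positive variable atoms of \<open>\<Phi>\<^sub>i(\<rho>)\<close> describe \<open>\<eta>\<^sub>i\<close> exactly:
  \<open>i:v = o\<close> belongs to it iff \<open>\<eta>\<^sub>i(v) = o\<close>, and \<open>i:v = null\<close> iff \<open>\<eta>\<^sub>i(v)\<close> is undefined.
  So every DNF literal holds at \<open>\<eta>\<^sub>i\<close> iff its translation lies in \<open>\<Phi>\<^sub>i(\<rho>)\<close>, and the DNF
  characterisation transfers this to \<open>\<Phi>\<close>. The characterisation is only an equivalence on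
  assignments, so one also needs that every \<open>\<eta>\<^sub>i\<close> along the run respects the domains; this
  holds because transitions only write values from \<open>dm\<close>.
\<close>

lemma valid_firing_assignment:
  assumes "daw_net W"
    and "valid_firing W M \<eta> t M' \<eta>'"
    and "assignment (dmodel W) \<eta>"
  shows "assignment (dmodel W) \<eta>'"
  unfolding assignment_def
proof (intro allI impI)
  fix v c
  assume c: "\<eta>' v = Some c"
  have "t \<in> transitions W"
    and update: "case wr W t v of
                  None \<Rightarrow> \<eta>' v = \<eta> v
                | Some S \<Rightarrow> (if S = {} then \<eta>' v = None else (\<exists>c\<in>S. \<eta>' v = Some c))"
    using assms(2) by (simp_all add: valid_firing_def)
  show "c \<in> dm (dmodel W) v"
  proof (cases "wr W t v")
    case None
    then show ?thesis using update c assms(3) by (simp add: assignment_def)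
  next
    case (Some S)
    with \<open>t \<in> transitions W\<close> assms(1) have "S \<subseteq> dm (dmodel W) v"
      by (simp add: daw_net_def)
    then show ?thesis using update c Some by (auto split: if_splits)
  qed
qed

lemma valid_run_assignment:
  assumes "daw_net W" and "valid_run W l Ms etas ts" and "i \<le> l"
  shows "assignment (dmodel W) (etas i)"
  using assms(3)
proof (induction i)
  case 0
  then show ?case using assms(2) by (simp add: valid_run_def)
next
  case (Suc i)
  then have "valid_firing W (Ms i) (etas i) (ts i) (Ms (Suc i)) (etas (Suc i))"
    using assms(2) by (simp add: valid_run_def)
  with Suc show ?case using assms(1) valid_firing_assignment by fastforce
qed

lemma holds_dlit_guard_iff_transl_in_Phi:
  assumes "dlit_var x \<in> net_vars W"
  shows "holds D (etas i) (dlit_guard x) \<longleftrightarrow> Pos (transl i x) \<in> Phi W l Ms etas ts i"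
  using assms by (cases x) (auto simp: Phi_def Phi_nu_def Phi_tau_def)

lemma holds_dnf_iff_models_transl:
  assumes "dnf_vars ds \<subseteq> net_vars W"
  shows "holds_dnf D (etas i) ds \<longleftrightarrow> models_transl (Phi W l Ms etas ts i) i ds"
  unfolding holds_dnf_def models_transl_def
proof (intro bex_cong[OF refl] ball_cong[OF refl])
  fix k x
  assume "k \<in> set ds" and "x \<in> set k"
  with assms have "dlit_var x \<in> net_vars W" by (auto simp: dnf_vars_def)
  then show "holds D (etas i) (dlit_guard x) \<longleftrightarrow> Pos (transl i x) \<in> Phi W l Ms etas ts i"
    by (rule holds_dlit_guard_iff_transl_in_Phi)
qed

theorem mainTheorem3:
  fixes W :: "('p, 't, 'v, 'c) dawnet"
    and l :: nat and Ms :: "nat \<Rightarrow> 'p \<Rightarrow> nat" and etas :: "nat \<Rightarrow> 'v \<Rightarrow> 'c option"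
    and ts :: "nat \<Rightarrow> 't" and i :: nat
    and \<Phi> :: "('v, 'c) guard" and ds :: "('v, 'c) dnf_lit list list"
  assumes "daw_net W" and "one_safe W"
    and "valid_run W l Ms etas ts"
    and "i \<le> l"
    and "dnf_char (dmodel W) \<Phi> ds"
    and "dnf_vars ds \<subseteq> net_vars W"
  shows "holds (dmodel W) (etas i) \<Phi> \<longleftrightarrow> models_transl (Phi W l Ms etas ts i) i ds"
proof -
  have "assignment (dmodel W) (etas i)"
    using assms(1,3,4) by (rule valid_run_assignment)
  with assms(5) have "holds (dmodel W) (etas i) \<Phi> \<longleftrightarrow> holds_dnf (dmodel W) (etas i) ds"
    by (simp add: dnf_char_def)
  also have "\<dots> \<longleftrightarrow> models_transl (Phi W l Ms etas ts i) i ds"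
    using assms(6) by (rule holds_dnf_iff_models_transl)
  finally show ?thesis .
qed

end
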